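(* Let $A$ be a commutative unital ring, $B$ an $A$-algebra that is finitely generated and free as an $A$-module, and $D$ a $B$-algebra. Let $\mathrm{Der}_B(D)$ be the set of all derivations $\partial$ of $D$ for which there exist a derivation $d$ of $A$ and a derivation $\delta$ of $B$ such that the structure maps are differential maps $(A,d)\to(B,\delta)$ and $(B,\delta)\to(D,\partial)$. For $\partial\in\mathrm{Der}_B(D)$ let $\partial^W$ denote the derivation of the classical Weil descent $W(D)$ given by: the unique derivation of $W(D)$ such that $(W(D),\partial^W)$ is a differential $(A,d)$-algebra and the unit $W_D:D\to W(D)\otimes_A B$ satisfies $W_D\circ\partial=(\partial^W\otimes\delta)\circ W_D$ (for any such $d,\delta$). Then $\mathrm{Der}_B(D)$ is an $A$-submodule and a Lie subring of $\mathrm{Der}(D)$ and the map $\mathrm{Der}_B(D)\to\mathrm{Der}(W(D))$, $\partial\mapsto\partial^W$, is an $A$-module and Lie ring homomorphism. Explicitly, for $\partial_1,\partial_2\in\mathrm{Der}_B(D)$: (i) $(a_1\partial_1+a_2\partial_2)^W=a_1\partial_1^W+a_2\partial_2^W$ for all $a_1,a_2\in A$; (ii) $[\partial_1,\partial_2]^W=[\partial_1^W,\partial_2^W]$; in particular $\partial_1^W,\partial_2^W$ commute if $\partial_1,\partial_2$ commute.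
   Context: All rings and algebras are commutative and unital. Classical Weil descent: for $B$ free of finite rank over $A$ and a $B$-algebra $D$, $W(D)$ is an $A$-algebra with a $B$-algebra homomorphism $W_D:D\to W(D)\otimes_A B$ such that for every $A$-algebra $C$ and every $B$-algebra homomorphism $f:D\to C\otimes_A B$ there is a unique $A$-algebra homomorphism $g:W(D)\to C$ with $(g\otimes\mathrm{id}_B)\circ W_D=f$. For a differential $(A,d)$-algebra $(C,\eta)$, $\eta\otimes\delta$ is the unique derivation of $C\otimes_A B$ making $C\to C\otimes_AB$ and $B\to C\otimes_AB$ differential. $[\partial_1,\partial_2]=\partial_1\partial_2-\partial_2\partial_1$. Elements of $A$ act on derivations of $D$ and of $W(D)$ via the structure maps. *)

theory Defs
  imports Main
begin

text \<open>All rings are commutative unital; a ring is modelled by a type of class comm_ring_1.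
  An algebra structure is a ring homomorphism (the structure map).\<close>

definition cring_hom :: "('r::comm_ring_1 \<Rightarrow> 's::comm_ring_1) \<Rightarrow> bool" where
  "cring_hom f \<longleftrightarrow> f 1 = 1 \<and> (\<forall>x y. f (x + y) = f x + f y) \<and> (\<forall>x y. f (x * y) = f x * f y)"

definition is_derivation :: "('r::comm_ring_1 \<Rightarrow> 'r) \<Rightarrow> bool" where
  "is_derivation D \<longleftrightarrow> (\<forall>x y. D (x + y) = D x + D y) \<and> (\<forall>x y. D (x * y) = x * D y + D x * y)"

definition is_differential_map :: "('r \<Rightarrow> 's) \<Rightarrow> ('r \<Rightarrow> 'r) \<Rightarrow> ('s \<Rightarrow> 's) \<Rightarrow> bool" where
  "is_differential_map f d e \<longleftrightarrow> (\<forall>x. f (d x) = e (f x))"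

text \<open>e 0, ..., e (n-1) is a basis of B as an A-module, A acting through phi.\<close>
definition free_basis :: "('a::comm_ring_1 \<Rightarrow> 'b::comm_ring_1) \<Rightarrow> nat \<Rightarrow> (nat \<Rightarrow> 'b) \<Rightarrow> bool" where
  "free_basis phi n e \<longleftrightarrow>
     (\<forall>b. \<exists>!c. (\<forall>i\<ge>n. c i = 0) \<and> b = (\<Sum>i<n. phi (c i) * e i))"

text \<open>(T, iC, iB) is the tensor product C \<otimes>_A B, where B is free over A with basis e:
  iC, iB are ring homs agreeing on A and T is a free C-module (via iC) with basis iB (e i).\<close>
definition is_tensor_product ::
  "('a::comm_ring_1 \<Rightarrow> 'b::comm_ring_1) \<Rightarrow> ('a \<Rightarrow> 'c::comm_ring_1) \<Rightarrow> nat \<Rightarrow> (nat \<Rightarrow> 'b)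
   \<Rightarrow> ('c \<Rightarrow> 't::comm_ring_1) \<Rightarrow> ('b \<Rightarrow> 't) \<Rightarrow> bool" where
  "is_tensor_product phi psi n e iC iB \<longleftrightarrow>
     cring_hom iC \<and> cring_hom iB \<and> (\<forall>a. iC (psi a) = iB (phi a)) \<and>
     (\<forall>t. \<exists>!w. (\<forall>i\<ge>n. w i = 0) \<and> t = (\<Sum>i<n. iC (w i) * iB (e i)))"

definition derB :: "('a::comm_ring_1 \<Rightarrow> 'b::comm_ring_1) \<Rightarrow> ('b \<Rightarrow> 'd::comm_ring_1) \<Rightarrow> ('d \<Rightarrow> 'd) \<Rightarrow> bool" where
  "derB phi chi D \<longleftrightarrow> is_derivation D \<and>
     (\<exists>d \<delta>. is_derivation d \<and> is_derivation \<delta> \<and>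
        is_differential_map phi d \<delta> \<and> is_differential_map chi \<delta> D)"

text \<open>X is a (the) derivation D^W of W(D): W(D) (structure map psi : A -> W) is a differential
  (A,d)-algebra and W_D o D = (X \<otimes> \<delta>) o W_D, where X \<otimes> \<delta> is the derivation E of
  T = W \<otimes>_A B making iW : W -> T and iB : B -> T differential.\<close>
definition weil_rel ::
  "('a::comm_ring_1 \<Rightarrow> 'b::comm_ring_1) \<Rightarrow> ('b \<Rightarrow> 'd::comm_ring_1) \<Rightarrow> ('a \<Rightarrow> 'w::comm_ring_1)
   \<Rightarrow> ('w \<Rightarrow> 't::comm_ring_1) \<Rightarrow> ('b \<Rightarrow> 't) \<Rightarrow> ('d \<Rightarrow> 't) \<Rightarrow> ('d \<Rightarrow> 'd) \<Rightarrow> ('w \<Rightarrow> 'w) \<Rightarrow> bool" where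
  "weil_rel phi chi psi iW iB WD D X \<longleftrightarrow> is_derivation X \<and>
     (\<exists>d \<delta>. is_derivation d \<and> is_derivation \<delta> \<and>
        is_differential_map phi d \<delta> \<and> is_differential_map chi \<delta> D \<and>
        is_differential_map psi d X \<and>
        (\<exists>E. is_derivation E \<and> is_differential_map iW X E \<and> is_differential_map iB \<delta> E \<and>
             is_differential_map WD D E))"

definition weil_der ::
  "('a::comm_ring_1 \<Rightarrow> 'b::comm_ring_1) \<Rightarrow> ('b \<Rightarrow> 'd::comm_ring_1) \<Rightarrow> ('a \<Rightarrow> 'w::comm_ring_1)
   \<Rightarrow> ('w \<Rightarrow> 't::comm_ring_1) \<Rightarrow> ('b \<Rightarrow> 't) \<Rightarrow> ('d \<Rightarrow> 't) \<Rightarrow> ('d \<Rightarrow> 'd) \<Rightarrow> ('w \<Rightarrow> 'w)" where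
  "weil_der phi chi psi iW iB WD D = (THE X. weil_rel phi chi psi iW iB WD D X)"

end

theory Submission
  imports Defs
begin

text \<open>Every condition defining \<open>Der\<^sub>B(D)\<close> and the Weil descent of a derivation is
  a family of identities \<open>f \<circ> d = e \<circ> f\<close> between derivations along ring homomorphisms
  \<open>f\<close>. Such identities survive linear combinations (with coefficients transported along
  \<open>f\<close>) and commutators, and derivations are closed under both operations. Hence
  linear combinations and commutators of solutions of the defining relation of \<open>\<partial>\<^sup>W\<close>
  are again solutions, and uniqueness of \<open>\<partial>\<^sup>W\<close> turns this into the homomorphism
  properties. Freeness of \<open>B\<close> only enters through that uniqueness, which is assumed.\<close>

lemma cring_hom_add: "cring_hom f \<Longrightarrow> f (x + y) = f x + f y"
  by (simp add: cring_hom_def)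

lemma cring_hom_mult: "cring_hom f \<Longrightarrow> f (x * y) = f x * f y"
  by (simp add: cring_hom_def)

lemma cring_hom_diff:
  assumes "cring_hom f"
  shows "f (x - y) = f x - f y"
  using cring_hom_add[OF assms, of "x - y" y] by (simp add: eq_diff_eq)

lemma cring_hom_0: "cring_hom f \<Longrightarrow> f 0 = 0"
  using cring_hom_diff[of f 0 0] by simp

lemma is_derivation_add: "is_derivation D \<Longrightarrow> D (x + y) = D x + D y"
  by (simp add: is_derivation_def)

lemma is_derivation_mult: "is_derivation D \<Longrightarrow> D (x * y) = x * D y + D x * y"
  by (simp add: is_derivation_def)

lemma is_derivation_0: "is_derivation (\<lambda>_. 0)"
  by (simp add: is_derivation_def)

lemma is_derivation_lincomb:
  "is_derivation D1 \<Longrightarrow> is_derivation D2 \<Longrightarrow> is_derivation (\<lambda>x. c1 * D1 x + c2 * D2 x)"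
  unfolding is_derivation_def by (auto simp: algebra_simps)

lemma is_derivation_commutator:
  assumes "is_derivation D1" and "is_derivation D2"
  shows "is_derivation (\<lambda>x. D1 (D2 x) - D2 (D1 x))"
  unfolding is_derivation_def
  by (simp add: is_derivation_add[OF assms(1)] is_derivation_add[OF assms(2)]
      is_derivation_mult[OF assms(1)] is_derivation_mult[OF assms(2)] algebra_simps)

lemma is_differential_map_0: "cring_hom f \<Longrightarrow> is_differential_map f (\<lambda>_. 0) (\<lambda>_. 0)"
  by (simp add: is_differential_map_def cring_hom_0)

lemma is_differential_map_lincomb:
  assumes "cring_hom f" and "is_differential_map f d1 e1" and "is_differential_map f d2 e2"
    and "f c1 = k1" and "f c2 = k2"
  shows "is_differential_map f (\<lambda>x. c1 * d1 x + c2 * d2 x) (\<lambda>y. k1 * e1 y + k2 * e2 y)"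
  using assms(2-) unfolding is_differential_map_def
  by (simp add: cring_hom_add[OF assms(1)] cring_hom_mult[OF assms(1)])

lemma is_differential_map_commutator:
  assumes "cring_hom f" and "is_differential_map f d1 e1" and "is_differential_map f d2 e2"
  shows "is_differential_map f (\<lambda>x. d1 (d2 x) - d2 (d1 x)) (\<lambda>y. e1 (e2 y) - e2 (e1 y))"
  using assms(2,3) unfolding is_differential_map_def by (simp add: cring_hom_diff[OF assms(1)])

lemma derB_0:
  assumes "cring_hom phi" and "cring_hom chi"
  shows "derB phi chi (\<lambda>_. 0)"
  unfolding derB_def by (blast intro: is_derivation_0 is_differential_map_0 assms)

lemma derB_lincomb:
  assumes phi: "cring_hom phi" and chi: "cring_hom chi"
    and "derB phi chi D1" and "derB phi chi D2"
  shows "derB phi chi (\<lambda>x. chi (phi a1) * D1 x + chi (phi a2) * D2 x)"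
proof -
  obtain d1 \<delta>1 d2 \<delta>2 where
    "is_derivation D1" "is_derivation d1" "is_derivation \<delta>1"
    "is_differential_map phi d1 \<delta>1" "is_differential_map chi \<delta>1 D1"
    "is_derivation D2" "is_derivation d2" "is_derivation \<delta>2"
    "is_differential_map phi d2 \<delta>2" "is_differential_map chi \<delta>2 D2"
    using assms(3,4) unfolding derB_def by blast
  then show ?thesis
    unfolding derB_def
    by (intro conjI exI[of _ "\<lambda>x. a1 * d1 x + a2 * d2 x"]
        exI[of _ "\<lambda>y. phi a1 * \<delta>1 y + phi a2 * \<delta>2 y"])
      (auto intro!: is_derivation_lincomb is_differential_map_lincomb simp: phi chi)
qed

lemma derB_commutator:
  assumes phi: "cring_hom phi" and chi: "cring_hom chi"
    and "derB phi chi D1" and "derB phi chi D2"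
  shows "derB phi chi (\<lambda>x. D1 (D2 x) - D2 (D1 x))"
proof -
  obtain d1 \<delta>1 d2 \<delta>2 where
    "is_derivation D1" "is_derivation d1" "is_derivation \<delta>1"
    "is_differential_map phi d1 \<delta>1" "is_differential_map chi \<delta>1 D1"
    "is_derivation D2" "is_derivation d2" "is_derivation \<delta>2"
    "is_differential_map phi d2 \<delta>2" "is_differential_map chi \<delta>2 D2"
    using assms(3,4) unfolding derB_def by blast
  then show ?thesis
    unfolding derB_def
    by (intro conjI exI[of _ "\<lambda>x. d1 (d2 x) - d2 (d1 x)"]
        exI[of _ "\<lambda>y. \<delta>1 (\<delta>2 y) - \<delta>2 (\<delta>1 y)"])
      (auto intro!: is_derivation_commutator is_differential_map_commutator simp: phi chi)
qed

lemma weil_der_eq: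
  assumes "\<exists>!X. weil_rel phi chi psi iW iB WD D X" and "weil_rel phi chi psi iW iB WD D X"
  shows "weil_der phi chi psi iW iB WD D = X"
  unfolding weil_der_def using assms by (blast intro: the1_equality)

lemma weil_rel_weil_der:
  assumes "\<exists>!X. weil_rel phi chi psi iW iB WD D X"
  shows "weil_rel phi chi psi iW iB WD D (weil_der phi chi psi iW iB WD D)"
  unfolding weil_der_def using assms by (rule theI')

locale weil_diagram =
  fixes phi :: "'a::comm_ring_1 \<Rightarrow> 'b::comm_ring_1" and chi :: "'b \<Rightarrow> 'd::comm_ring_1"
    and psi :: "'a \<Rightarrow> 'w::comm_ring_1"
    and iW :: "'w \<Rightarrow> 't::comm_ring_1" and iB :: "'b \<Rightarrow> 't" and WD :: "'d \<Rightarrow> 't"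
  assumes phi: "cring_hom phi" and chi: "cring_hom chi" and psi: "cring_hom psi"
    and iW: "cring_hom iW" and iB: "cring_hom iB" and WD: "cring_hom WD"
    and iW_psi: "iW (psi a) = iB (phi a)"
    and WD_chi: "WD (chi b) = iB b"
begin

lemma weil_rel_0: "weil_rel phi chi psi iW iB WD (\<lambda>_. 0) (\<lambda>_. 0)"
  unfolding weil_rel_def
  by (blast intro: is_derivation_0 is_differential_map_0 phi chi psi iW iB WD)

lemma weil_rel_lincomb:
  assumes "weil_rel phi chi psi iW iB WD D1 X1" and "weil_rel phi chi psi iW iB WD D2 X2"
  shows "weil_rel phi chi psi iW iB WD (\<lambda>x. chi (phi a1) * D1 x + chi (phi a2) * D2 x)
    (\<lambda>w. psi a1 * X1 w + psi a2 * X2 w)"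
proof -
  obtain d1 \<delta>1 E1 d2 \<delta>2 E2 where
    "is_derivation X1" "is_derivation d1" "is_derivation \<delta>1" "is_derivation E1"
    "is_differential_map phi d1 \<delta>1" "is_differential_map chi \<delta>1 D1"
    "is_differential_map psi d1 X1" "is_differential_map iW X1 E1"
    "is_differential_map iB \<delta>1 E1" "is_differential_map WD D1 E1"
    "is_derivation X2" "is_derivation d2" "is_derivation \<delta>2" "is_derivation E2"
    "is_differential_map phi d2 \<delta>2" "is_differential_map chi \<delta>2 D2"
    "is_differential_map psi d2 X2" "is_differential_map iW X2 E2"
    "is_differential_map iB \<delta>2 E2" "is_differential_map WD D2 E2"
    using assms unfolding weil_rel_def by blast
  then show ?thesis
    unfolding weil_rel_def
    by (intro exI[of _ "\<lambda>x. a1 * d1 x + a2 * d2 x"]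
        exI[of _ "\<lambda>y. phi a1 * \<delta>1 y + phi a2 * \<delta>2 y"]
        exI[of _ "\<lambda>y. iB (phi a1) * E1 y + iB (phi a2) * E2 y"] conjI)
      (auto intro!: is_derivation_lincomb is_differential_map_lincomb
        simp: phi chi psi iW iB WD iW_psi WD_chi)
qed

lemma weil_rel_commutator:
  assumes "weil_rel phi chi psi iW iB WD D1 X1" and "weil_rel phi chi psi iW iB WD D2 X2"
  shows "weil_rel phi chi psi iW iB WD (\<lambda>x. D1 (D2 x) - D2 (D1 x)) (\<lambda>w. X1 (X2 w) - X2 (X1 w))"
proof -
  obtain d1 \<delta>1 E1 d2 \<delta>2 E2 where
    "is_derivation X1" "is_derivation d1" "is_derivation \<delta>1" "is_derivation E1"
    "is_differential_map phi d1 \<delta>1" "is_differential_map chi \<delta>1 D1"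
    "is_differential_map psi d1 X1" "is_differential_map iW X1 E1"
    "is_differential_map iB \<delta>1 E1" "is_differential_map WD D1 E1"
    "is_derivation X2" "is_derivation d2" "is_derivation \<delta>2" "is_derivation E2"
    "is_differential_map phi d2 \<delta>2" "is_differential_map chi \<delta>2 D2"
    "is_differential_map psi d2 X2" "is_differential_map iW X2 E2"
    "is_differential_map iB \<delta>2 E2" "is_differential_map WD D2 E2"
    using assms unfolding weil_rel_def by blast
  then show ?thesis
    unfolding weil_rel_def
    by (intro exI[of _ "\<lambda>x. d1 (d2 x) - d2 (d1 x)"]
        exI[of _ "\<lambda>y. \<delta>1 (\<delta>2 y) - \<delta>2 (\<delta>1 y)"]
        exI[of _ "\<lambda>y. E1 (E2 y) - E2 (E1 y)"] conjI)
      (auto intro!: is_derivation_commutator is_differential_map_commutator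
        simp: phi chi psi iW iB WD)
qed

end

theorem theorem3p3:
  fixes phi :: "'a::comm_ring_1 \<Rightarrow> 'b::comm_ring_1"
    and chi :: "'b \<Rightarrow> 'd::comm_ring_1"
    and n :: nat and e :: "nat \<Rightarrow> 'b"
    and psi :: "'a \<Rightarrow> 'w::comm_ring_1"
    and iW :: "'w \<Rightarrow> 't::comm_ring_1" and iB :: "'b \<Rightarrow> 't"
    and WD :: "'d \<Rightarrow> 't"
    and D1 D2 :: "'d \<Rightarrow> 'd" and a1 a2 :: 'a
  assumes "cring_hom phi" and "cring_hom chi" and "free_basis phi n e"
    and "cring_hom psi"
    and "is_tensor_product phi psi n e iW iB"
    and "cring_hom WD" and "\<forall>b. WD (chi b) = iB b"
    and well_def: "\<forall>D. derB phi chi D \<longrightarrow> (\<exists>!X. weil_rel phi chi psi iW iB WD D X)"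
    and "derB phi chi D1" and "derB phi chi D2"
  shows "derB phi chi (\<lambda>_. 0)
    \<and> derB phi chi (\<lambda>x. chi (phi a1) * D1 x + chi (phi a2) * D2 x)
    \<and> derB phi chi (\<lambda>x. D1 (D2 x) - D2 (D1 x))
    \<and> weil_der phi chi psi iW iB WD (\<lambda>x. chi (phi a1) * D1 x + chi (phi a2) * D2 x)
        = (\<lambda>w. psi a1 * weil_der phi chi psi iW iB WD D1 w + psi a2 * weil_der phi chi psi iW iB WD D2 w)
    \<and> weil_der phi chi psi iW iB WD (\<lambda>x. D1 (D2 x) - D2 (D1 x))
        = (\<lambda>w. weil_der phi chi psi iW iB WD D1 (weil_der phi chi psi iW iB WD D2 w)
              - weil_der phi chi psi iW iB WD D2 (weil_der phi chi psi iW iB WD D1 w))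
    \<and> (D1 \<circ> D2 = D2 \<circ> D1 \<longrightarrow>
        weil_der phi chi psi iW iB WD D1 \<circ> weil_der phi chi psi iW iB WD D2
          = weil_der phi chi psi iW iB WD D2 \<circ> weil_der phi chi psi iW iB WD D1)"
proof -
  interpret weil_diagram phi chi psi iW iB WD
    using assms(1,2,4-7) by unfold_locales (auto simp: is_tensor_product_def)
  let ?W = "weil_der phi chi psi iW iB WD"
  have W_eq: "?W D = X" if "derB phi chi D" and "weil_rel phi chi psi iW iB WD D X" for D X
    using well_def that by (blast intro: weil_der_eq)
  have W_rel: "weil_rel phi chi psi iW iB WD D (?W D)" if "derB phi chi D" for D
    using well_def that by (blast intro: weil_rel_weil_der)
  note der0 = derB_0[OF assms(1,2)]
    and derL = derB_lincomb[OF assms(1,2,9,10)]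
    and derC = derB_commutator[OF assms(1,2,9,10)]
  have WL: "?W (\<lambda>x. chi (phi a1) * D1 x + chi (phi a2) * D2 x)
      = (\<lambda>w. psi a1 * ?W D1 w + psi a2 * ?W D2 w)"
    by (intro W_eq derL weil_rel_lincomb W_rel assms(9,10))
  have WC: "?W (\<lambda>x. D1 (D2 x) - D2 (D1 x)) = (\<lambda>w. ?W D1 (?W D2 w) - ?W D2 (?W D1 w))"
    by (intro W_eq derC weil_rel_commutator W_rel assms(9,10))
  have "?W D1 \<circ> ?W D2 = ?W D2 \<circ> ?W D1" if "D1 \<circ> D2 = D2 \<circ> D1"
  proof -
    have "(\<lambda>x. D1 (D2 x) - D2 (D1 x)) = (\<lambda>_. 0)"
      using that by (simp add: fun_eq_iff)
    then have "(\<lambda>w. ?W D1 (?W D2 w) - ?W D2 (?W D1 w)) = (\<lambda>_. 0)"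
      using WC W_eq[OF der0 weil_rel_0] by simp
    then show ?thesis by (simp add: fun_eq_iff)
  qed
  with der0 derL derC WL WC show ?thesis by blast
qed

end
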